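(* Let $\mu$ be a doubling measure on $\mathbb Z$ with $C^0_\mu=3$, and set $a_j=\mu(j)$. If there is $j_0\in\mathbb Z$ with $a_{j_0}<a_{j_0+1}$, then $a_j<a_{j+1}$ for every $j\le j_0$.
   Context: $\mathbb Z$ is the infinite path graph with edges $\{j,j+1\}$ and distance $|i-j|$. A measure is a weight function $\mu:\mathbb Z\to(0,\infty)$, $\mu(A)=\sum_{v\in A}\mu(v)$; $B(x,r)=\{y:|x-y|\le r\}$; $\mu$ is doubling if $\sup\{\mu(B(x,2k+1))/\mu(B(x,k)):x\in\mathbb Z,k\ge0\}<\infty$; $C^0_\mu=\sup_{x\in\mathbb Z}\mu(B(x,1))/\mu(x)$. *)

theory Defs
  imports Main "HOL.Real"
begin

definition zball :: "int \<Rightarrow> nat \<Rightarrow> int set" where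
  "zball x r = {y. \<bar>x - y\<bar> \<le> int r}"

text \<open>Measure of a set of vertices (only used on finite balls).\<close>
definition zmeas :: "(int \<Rightarrow> real) \<Rightarrow> int set \<Rightarrow> real" where
  "zmeas \<mu> A = (\<Sum>v\<in>A. \<mu> v)"

definition is_measure :: "(int \<Rightarrow> real) \<Rightarrow> bool" where
  "is_measure \<mu> \<longleftrightarrow> (\<forall>v. \<mu> v > 0)"

definition doubling :: "(int \<Rightarrow> real) \<Rightarrow> bool" where
  "doubling \<mu> \<longleftrightarrow> bdd_above {zmeas \<mu> (zball x (2*k+1)) / zmeas \<mu> (zball x k) | x k. True}"

definition C0 :: "(int \<Rightarrow> real) \<Rightarrow> real" where
  "C0 \<mu> = (SUP x. zmeas \<mu> (zball x 1) / \<mu> x)"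

end

theory Submission
  imports Defs
begin

(* C^0_mu <= 3 forces mu(x-1) + mu(x+1) <= 2 mu(x) at every vertex, i.e. the weights form a
   discretely concave sequence. Doubling is needed only to make the supremum C^0_mu an actual
   upper bound of the ratios mu(B(x,1))/mu(x), which are the k = 0 doubling ratios.
   The increments mu(j+1) - mu(j) of a concave sequence are non-increasing in j, so a positive
   increment at j0 stays positive at every j <= j0. *)

lemma zball_0: "zball x 0 = {x}"
  unfolding zball_def by auto

lemma zball_1: "zball x 1 = {x - 1, x, x + 1}"
  unfolding zball_def by auto

lemma zmeas_zball_1: "zmeas \<mu> (zball x 1) = \<mu> (x - 1) + \<mu> x + \<mu> (x + 1)"
  unfolding zball_1 zmeas_def by simp

lemma doubling_imp_bdd_above_C0_ratios:
  assumes "doubling \<mu>"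
  shows "bdd_above (range (\<lambda>x. zmeas \<mu> (zball x 1) / \<mu> x))"
proof -
  have "zmeas \<mu> (zball x 1) / \<mu> x = zmeas \<mu> (zball x (2 * 0 + 1)) / zmeas \<mu> (zball x 0)" for x
    by (simp add: zball_0 zmeas_def)
  then have "range (\<lambda>x. zmeas \<mu> (zball x 1) / \<mu> x)
      \<subseteq> {zmeas \<mu> (zball x (2 * k + 1)) / zmeas \<mu> (zball x k) | x k. True}"
    by blast
  with assms show ?thesis
    unfolding doubling_def by (rule bdd_above_mono)
qed

lemma zmeas_zball_1_le_C0:
  assumes "is_measure \<mu>" and "doubling \<mu>"
  shows "zmeas \<mu> (zball x 1) \<le> C0 \<mu> * \<mu> x"
proof -
  have "zmeas \<mu> (zball x 1) / \<mu> x \<le> C0 \<mu>"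
    unfolding C0_def
    using cSUP_upper[OF UNIV_I doubling_imp_bdd_above_C0_ratios[OF assms(2)]] .
  moreover have "\<mu> x > 0"
    using assms(1) unfolding is_measure_def by blast
  ultimately show ?thesis
    by (simp add: divide_le_eq)
qed

lemma C0_le_3_imp_midpoint_concave:
  assumes "is_measure \<mu>" and "doubling \<mu>" and "C0 \<mu> \<le> 3"
  shows "\<mu> (x - 1) + \<mu> (x + 1) \<le> 2 * \<mu> x"
proof -
  have "C0 \<mu> * \<mu> x \<le> 3 * \<mu> x"
    using assms(1,3) unfolding is_measure_def by (simp add: less_imp_le)
  with zmeas_zball_1_le_C0[OF assms(1,2), of x] show ?thesis
    unfolding zmeas_zball_1 by linarith
qed

lemma midpoint_concave_increments_antimono:
  fixes f :: "int \<Rightarrow> real"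
  assumes concave: "\<And>x. f (x - 1) + f (x + 1) \<le> 2 * f x"
    and "j \<le> k"
  shows "f (k + 1) - f k \<le> f (j + 1) - f j"
  using \<open>j \<le> k\<close>
proof (induction j rule: int_le_induct)
  case base
  show ?case by simp
next
  case (step i)
  have "f (i - 1) + f (i + 1) \<le> 2 * f i"
    by (rule concave)
  with step.IH show ?case
    by simp
qed

theorem lemma4p5:
  fixes \<mu> :: "int \<Rightarrow> real" and j0 :: int
  assumes "is_measure \<mu>"
    and "doubling \<mu>"
    and "C0 \<mu> = 3"
    and "\<mu> j0 < \<mu> (j0 + 1)"
  shows "\<forall>j\<le>j0. \<mu> j < \<mu> (j + 1)"
proof (intro allI impI)
  fix j
  assume "j \<le> j0"
  have "\<And>x. \<mu> (x - 1) + \<mu> (x + 1) \<le> 2 * \<mu> x"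
    using C0_le_3_imp_midpoint_concave[OF assms(1,2)] assms(3) by simp
  then have "\<mu> (j0 + 1) - \<mu> j0 \<le> \<mu> (j + 1) - \<mu> j"
    using \<open>j \<le> j0\<close> by (rule midpoint_concave_increments_antimono)
  with assms(4) show "\<mu> j < \<mu> (j + 1)"
    by simp
qed

end
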